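(* There exist a proper $r\in[0,1]$ and a sequence $x\in\mathsf{MLR}_{\mu_r}$ such that $x$ is continuously proper but $r$ is not continuously proper.
   Context: For $p\in[0,1]$ the Bernoulli measure $\mu_p$ on $2^\omega$ is determined by $\mu_p(\llbracket\sigma\rrbracket)=p^{\#_0(\sigma)}(1-p)^{\#_1(\sigma)}$, where $\#_i(\sigma)$ is the number of occurrences of $i$ in $\sigma$. A real $p\in[0,1]$ is identified with its binary expansion in $2^\omega$, and measures on $[0,1]$ with measures on $2^\omega$. $\mathsf{MLR}_{\mu_p}$ is the set of sequences Martin-Löf random for $\mu_p$ relative to the oracle $p$. A sequence/real is proper if it is Martin-Löf random with respect to some computable measure, and continuously proper if it is Martin-Löf random with respect to some computable measure $\mu$ with $\mu(\{z\})=0$ for all $z$. *)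

theory Defs
  imports Complex_Main "HOL-Library.Nat_Bijection" "HOL-Library.Sublist"
begin

text \<open>Sequences in Cantor space are functions nat => bool (False = 0, True = 1);
finite strings are bool lists.  An oracle is a sequence nat => bool.\<close>

datatype recf = Zf | Sf | Proj nat | Comp recf "recf list" | Prec recf recf | Mn recf | Orc

inductive ev :: "(nat \<Rightarrow> bool) \<Rightarrow> recf \<Rightarrow> nat list \<Rightarrow> nat \<Rightarrow> bool"
  for X :: "nat \<Rightarrow> bool" where
  ev_Z: "ev X Zf xs 0"
| ev_S: "ev X Sf (x # xs) (Suc x)"
| ev_Proj: "i < length xs \<Longrightarrow> ev X (Proj i) xs (xs ! i)"
| ev_Comp: "list_all2 (\<lambda>g y. ev X g xs y) gs ys \<Longrightarrow> ev X f ys z \<Longrightarrow> ev X (Comp f gs) xs z"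
| ev_Prec0: "ev X f xs y \<Longrightarrow> ev X (Prec f g) (0 # xs) y"
| ev_PrecS: "ev X (Prec f g) (n # xs) y \<Longrightarrow> ev X g (y # n # xs) z \<Longrightarrow> ev X (Prec f g) (Suc n # xs) z"
| ev_Mn: "ev X f (n # xs) 0 \<Longrightarrow> (\<forall>m<n. \<exists>y. ev X f (m # xs) y \<and> y \<noteq> 0) \<Longrightarrow> ev X (Mn f) xs n"
| ev_Orc: "ev X Orc (n # xs) (if X n then 1 else 0)"

definition comp_fun :: "(nat \<Rightarrow> bool) \<Rightarrow> (nat \<Rightarrow> nat) \<Rightarrow> bool" where
  "comp_fun X f \<longleftrightarrow> (\<exists>P. \<forall>n. ev X P [n] (f n))"

definition ce :: "(nat \<Rightarrow> bool) \<Rightarrow> nat set \<Rightarrow> bool" where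
  "ce X W \<longleftrightarrow> (\<exists>P. W = {n. \<exists>y. ev X P [n] y})"

definition no_oracle :: "nat \<Rightarrow> bool" where
  "no_oracle = (\<lambda>_. False)"

definition str_code :: "bool list \<Rightarrow> nat" where
  "str_code \<sigma> = list_encode (map (\<lambda>b. if b then 1 else 0) \<sigma>)"

definition rat_dec :: "nat \<Rightarrow> real" where
  "rat_dec k = (case prod_decode k of (a, b) \<Rightarrow> of_int (int_decode a) / of_nat (Suc b))"

definition init :: "(nat \<Rightarrow> bool) \<Rightarrow> nat \<Rightarrow> bool list" where
  "init x n = map x [0..<n]"

text \<open>m \<sigma> is the measure of the cylinder [[\<sigma>]]; such an m determines a unique
Borel probability measure on 2^omega.\<close>
definition is_meas :: "(bool list \<Rightarrow> real) \<Rightarrow> bool" where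
  "is_meas m \<longleftrightarrow> m [] = 1 \<and> (\<forall>\<sigma>. 0 \<le> m \<sigma> \<and> m \<sigma> = m (\<sigma> @ [False]) + m (\<sigma> @ [True]))"

text \<open>Measure of the open set [[S]] generated by a set S of strings.\<close>
definition open_meas :: "(bool list \<Rightarrow> real) \<Rightarrow> bool list set \<Rightarrow> real" where
  "open_meas m S = (SUP L. \<Sum>\<tau>\<in>{\<tau>. length \<tau> = L \<and> (\<exists>\<sigma>\<in>S. prefix \<sigma> \<tau>)}. m \<tau>)"

text \<open>Computable measure: the cylinder values are uniformly computable reals.\<close>
definition comp_meas :: "(bool list \<Rightarrow> real) \<Rightarrow> bool" where
  "comp_meas m \<longleftrightarrow> (\<exists>f. comp_fun no_oracle f \<and>
     (\<forall>\<sigma> n. \<bar>rat_dec (f (prod_encode (str_code \<sigma>, n))) - m \<sigma>\<bar> \<le> (1/2) ^ n))"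

text \<open>mu({z}) = 0 for all z.\<close>
definition atomless :: "(bool list \<Rightarrow> real) \<Rightarrow> bool" where
  "atomless m \<longleftrightarrow> (\<forall>z. (\<lambda>n. m (init z n)) \<longlonglongrightarrow> 0)"

definition test_level :: "nat set \<Rightarrow> nat \<Rightarrow> bool list set" where
  "test_level W n = {\<sigma>. prod_encode (n, str_code \<sigma>) \<in> W}"

definition MLR :: "(bool list \<Rightarrow> real) \<Rightarrow> (nat \<Rightarrow> bool) \<Rightarrow> (nat \<Rightarrow> bool) \<Rightarrow> bool" where
  "MLR m X x \<longleftrightarrow> \<not> (\<exists>W. ce X W \<and> (\<forall>n. open_meas m (test_level W n) \<le> (1/2) ^ n)
                       \<and> (\<forall>n. \<exists>\<sigma>\<in>test_level W n. \<sigma> = init x (length \<sigma>)))"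

definition proper :: "(nat \<Rightarrow> bool) \<Rightarrow> bool" where
  "proper x \<longleftrightarrow> (\<exists>m. is_meas m \<and> comp_meas m \<and> MLR m no_oracle x)"

definition cont_proper :: "(nat \<Rightarrow> bool) \<Rightarrow> bool" where
  "cont_proper x \<longleftrightarrow> (\<exists>m. is_meas m \<and> comp_meas m \<and> atomless m \<and> MLR m no_oracle x)"

definition bern :: "real \<Rightarrow> bool list \<Rightarrow> real" where
  "bern p \<sigma> = p ^ length (filter Not \<sigma>) * (1 - p) ^ length (filter id \<sigma>)"

text \<open>Binary expansion of p in [0,1]: digit n (0-based) is the (n+1)-st binary digit
after the point; for dyadic p < 1 the terminating expansion is used, and 1 = 0.111...\<close>
definition binexp :: "real \<Rightarrow> nat \<Rightarrow> bool" where
  "binexp p = (if p = 1 then (\<lambda>_. True) else (\<lambda>n. odd (nat \<lfloor>p * 2 ^ Suc n\<rfloor>)))"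

end

theory Submission
  imports Defs "HOL-Library.Countable"
begin

text \<open>Take r = 1/2, whose binary expansion z = 1000... is computable. The point mass at a
  computable sequence is a computable measure for which the sequence is random, so z is proper.
  If z were random for a computable atomless measure m, the initial segments of z would have
  m-measure tending to 0, and the segments certified to be small at precision 2^-(n+1) form an
  effective test at level n covering z; so z is not continuously proper. Finally, the tests of all
  oracles in a countable family can be merged level-wise into one open set of uniform measure at most
  1/2; Koenig's lemma yields a sequence avoiding it, which is then random for the uniform measure
  relative to both z and the empty oracle, hence continuously proper.\<close>

section \<open>Recursive functions relative to an oracle\<close>

lemma ev_deterministic: "ev X P xs y \<Longrightarrow> ev X P xs y' \<Longrightarrow> y = y'"
proof (induction arbitrary: y' rule: ev.induct)
  case (ev_Comp xs gs ys f z)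
  from ev_Comp.prems obtain ys' where gs: "list_all2 (\<lambda>g y. ev X g xs y) gs ys'" and f: "ev X f ys' y'"
    by (cases rule: ev.cases) auto
  have "ys = ys'" using ev_Comp.IH(1) gs
  proof (induction gs arbitrary: ys ys')
    case (Cons g gs)
    then obtain y1 ys1 y2 ys2 where "ys = y1 # ys1" "ys' = y2 # ys2" by (auto simp: list_all2_Cons1)
    with Cons show ?case by auto
  qed simp
  with f ev_Comp.IH(2) show ?case by simp
next
  case (ev_Prec0 f xs y g)
  from ev_Prec0.prems show ?case by (cases rule: ev.cases) (use ev_Prec0.IH in auto)
next
  case (ev_PrecS f g n xs y z)
  from ev_PrecS.prems show ?case by (cases rule: ev.cases) (use ev_PrecS.IH in auto)
next
  case (ev_Mn f n xs)
  from ev_Mn.prems obtain n' where "y' = n'" "ev X f (n' # xs) 0" "\<forall>m<n'. \<exists>y. ev X f (m # xs) y \<and> y \<noteq> 0"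
    by (cases rule: ev.cases) auto
  with ev_Mn.IH show ?case by (metis linorder_neqE_nat)
qed (auto elim: ev.cases)

definition recfn :: "(nat \<Rightarrow> bool) \<Rightarrow> nat \<Rightarrow> (nat list \<Rightarrow> nat) \<Rightarrow> bool" where
  "recfn X k F \<longleftrightarrow> (\<exists>P. \<forall>xs. length xs = k \<longrightarrow> ev X P xs (F xs))"

text \<open>Characteristic functions use 0 for truth, matching the \<mu>-operator Mn.\<close>
definition rec_pred :: "(nat \<Rightarrow> bool) \<Rightarrow> nat \<Rightarrow> (nat list \<Rightarrow> bool) \<Rightarrow> bool" where
  "rec_pred X k P \<longleftrightarrow> recfn X k (\<lambda>xs. if P xs then 0 else 1)"

lemma comp_fun_iff_recfn: "comp_fun X f \<longleftrightarrow> recfn X 1 (\<lambda>xs. f (xs ! 0))"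
proof -
  have "(\<forall>xs. length xs = 1 \<longrightarrow> ev X P xs (f (xs ! 0))) \<longleftrightarrow> (\<forall>n. ev X P [n] (f n))" for P
    by (auto simp: length_Suc_conv)
  then show ?thesis unfolding comp_fun_def recfn_def by simp
qed

lemma recfn_cong: "recfn X k F \<Longrightarrow> (\<And>xs. length xs = k \<Longrightarrow> F xs = G xs) \<Longrightarrow> recfn X k G"
  unfolding recfn_def by metis

lemma rec_pred_cong: "rec_pred X k P \<Longrightarrow> (\<And>xs. length xs = k \<Longrightarrow> P xs = Q xs) \<Longrightarrow> rec_pred X k Q"
  unfolding rec_pred_def by (erule recfn_cong) simp

lemma recfn_zero: "recfn X k (\<lambda>_. 0)"
  unfolding recfn_def by (auto intro: ev_Z)

lemma recfn_proj: "i < k \<Longrightarrow> recfn X k (\<lambda>xs. xs ! i)"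
  unfolding recfn_def by (auto intro: ev_Proj)

lemma recfn_comp:
  assumes "list_all (recfn X k) Gs" and "recfn X (length Gs) F"
  shows "recfn X k (\<lambda>xs. F (map (\<lambda>G. G xs) Gs))"
proof -
  have "\<exists>Ps. list_all2 (\<lambda>P G. \<forall>xs. length xs = k \<longrightarrow> ev X P xs (G xs)) Ps Gs"
    using assms(1)
  proof (induction Gs)
    case (Cons G Gs)
    then obtain Ps where "list_all2 (\<lambda>P G. \<forall>xs. length xs = k \<longrightarrow> ev X P xs (G xs)) Ps Gs"
      by auto
    moreover from Cons.prems obtain P where "\<forall>xs. length xs = k \<longrightarrow> ev X P xs (G xs)"
      by (auto simp: recfn_def)
    ultimately show ?case by (intro exI[of _ "P # Ps"]) auto
  qed simp
  then obtain Ps where Ps: "list_all2 (\<lambda>P G. \<forall>xs. length xs = k \<longrightarrow> ev X P xs (G xs)) Ps Gs"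
    by blast
  from assms(2) obtain Q where Q: "\<forall>ys. length ys = length Gs \<longrightarrow> ev X Q ys (F ys)"
    by (auto simp: recfn_def)
  have "ev X (Comp Q Ps) xs (F (map (\<lambda>G. G xs) Gs))" if "length xs = k" for xs
  proof (rule ev_Comp)
    show "list_all2 (\<lambda>g y. ev X g xs y) Ps (map (\<lambda>G. G xs) Gs)"
      using Ps that by (induction rule: list_all2_induct) auto
  qed (use Q in simp)
  then show ?thesis unfolding recfn_def by blast
qed

lemma recfn_comp1: "recfn X 1 (\<lambda>xs. g (xs ! 0)) \<Longrightarrow> recfn X k A \<Longrightarrow> recfn X k (\<lambda>xs. g (A xs))"
  using recfn_comp[of X k "[A]" "\<lambda>xs. g (xs ! 0)"] by simp

lemma recfn_comp2:
  "recfn X 2 (\<lambda>xs. g (xs ! 0) (xs ! 1)) \<Longrightarrow> recfn X k A \<Longrightarrow> recfn X k B \<Longrightarrow>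
   recfn X k (\<lambda>xs. g (A xs) (B xs))"
  using recfn_comp[of X k "[A, B]" "\<lambda>xs. g (xs ! 0) (xs ! 1)"] by (simp add: numeral_2_eq_2)

lemma recfn_Suc: "recfn X k A \<Longrightarrow> recfn X k (\<lambda>xs. Suc (A xs))"
  by (rule recfn_comp1) (auto simp: recfn_def length_Suc_conv intro!: exI[of _ Sf] ev_S)

lemma recfn_const: "recfn X k (\<lambda>_. c)"
  by (induction c) (auto intro: recfn_zero recfn_Suc)

lemma recfn_rec_nat:
  assumes "recfn X k F" and "recfn X (Suc (Suc k)) G"
  shows "recfn X (Suc k) (\<lambda>xs. rec_nat (F (tl xs)) (\<lambda>m r. G (r # m # tl xs)) (hd xs))"
proof -
  obtain P Q where P: "\<forall>xs. length xs = k \<longrightarrow> ev X P xs (F xs)"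
    and Q: "\<forall>xs. length xs = Suc (Suc k) \<longrightarrow> ev X Q xs (G xs)"
    using assms by (auto simp: recfn_def)
  have "ev X (Prec P Q) (n # xs) (rec_nat (F xs) (\<lambda>m r. G (r # m # xs)) n)" if "length xs = k" for n xs
  proof (induction n)
    case (Suc n)
    show ?case by (rule ev_PrecS[OF Suc.IH]) (use Q that in simp)
  qed (use P that in \<open>auto intro: ev_Prec0\<close>)
  then show ?thesis unfolding recfn_def
    by (intro exI[of _ "Prec P Q"]) (auto simp: length_Suc_conv)
qed

lemma recfn_rec_nat_unary:
  assumes "recfn X 2 (\<lambda>xs. g (xs ! 1) (xs ! 0))"
  shows "recfn X 1 (\<lambda>xs. rec_nat a g (xs ! 0))"
proof -
  have "recfn X 1 (\<lambda>xs. rec_nat a g (hd xs))"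
    using recfn_rec_nat[OF recfn_const[of X 0 a], of "\<lambda>ys. g (ys ! 1) (ys ! 0)"] assms
    by (simp add: numeral_2_eq_2 One_nat_def)
  then show ?thesis
    by (rule recfn_cong) (auto simp: length_Suc_conv One_nat_def)
qed

lemma recfn_rec_nat_binary:
  assumes "recfn X 1 (\<lambda>xs. f (xs ! 0))" and "recfn X 3 (\<lambda>xs. g (xs ! 2) (xs ! 1) (xs ! 0))"
  shows "recfn X 2 (\<lambda>xs. rec_nat (f (xs ! 1)) (g (xs ! 1)) (xs ! 0))"
proof -
  have "recfn X 2 (\<lambda>xs. rec_nat (f (tl xs ! 0)) (g (tl xs ! 0)) (hd xs))"
    using recfn_rec_nat[of X 1 "\<lambda>xs. f (xs ! 0)" "\<lambda>xs. g (xs ! 2) (xs ! 1) (xs ! 0)"] assms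
    by (simp add: numeral_2_eq_2 numeral_3_eq_3)
  then show ?thesis
    by (rule recfn_cong) (auto simp: length_Suc_conv numeral_2_eq_2)
qed

lemma ev_Mn_iff:
  assumes Q: "\<forall>ys. length ys = Suc k \<longrightarrow> ev X Q ys (if P ys then 0 else 1)" and "length xs = k"
  shows "ev X (Mn Q) xs n \<longleftrightarrow> P (n # xs) \<and> (\<forall>m<n. \<not> P (m # xs))"
proof -
  have Q': "ev X Q (m # xs) (if P (m # xs) then 0 else 1)" for m
    using Q assms(2) by simp
  have val: "ev X Q (m # xs) y \<longleftrightarrow> y = (if P (m # xs) then 0 else 1)" for m y
    using Q' ev_deterministic by blast
  show ?thesis
  proof
    assume "ev X (Mn Q) xs n"
    then show "P (n # xs) \<and> (\<forall>m<n. \<not> P (m # xs))"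
      by (cases rule: ev.cases) (auto simp: val split: if_splits)
  next
    assume n: "P (n # xs) \<and> (\<forall>m<n. \<not> P (m # xs))"
    have "ev X Q (m # xs) 1" if "m < n" for m
      using Q'[of m] n that by simp
    with n Q'[of n] show "ev X (Mn Q) xs n"
      by (intro ev_Mn) auto
  qed
qed

lemma recfn_Least:
  assumes "rec_pred X (Suc k) P" and "\<And>xs. length xs = k \<Longrightarrow> \<exists>n. P (n # xs)"
  shows "recfn X k (\<lambda>xs. LEAST n. P (n # xs))"
proof -
  obtain Q where Q: "\<forall>ys. length ys = Suc k \<longrightarrow> ev X Q ys (if P ys then 0 else 1)"
    using assms(1) by (auto simp: rec_pred_def recfn_def)
  have "ev X (Mn Q) xs (LEAST n. P (n # xs))" if "length xs = k" for xs
    unfolding ev_Mn_iff[OF Q that]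
    using LeastI_ex[OF assms(2)[OF that]] not_less_Least by blast
  then show ?thesis unfolding recfn_def by blast
qed

lemma ce_rec_pred: "rec_pred X 2 P \<Longrightarrow> ce X {w. \<exists>n. P [n, w]}"
proof -
  assume "rec_pred X 2 P"
  then obtain Q where Q: "\<forall>ys. length ys = Suc 1 \<longrightarrow> ev X Q ys (if P ys then 0 else 1)"
    by (auto simp: rec_pred_def recfn_def numeral_2_eq_2)
  have "(\<exists>y. ev X (Mn Q) [w] y) \<longleftrightarrow> (\<exists>n. P [n, w])" for w
    unfolding ev_Mn_iff[OF Q, of "[w]", simplified]
    using LeastI_ex[of "\<lambda>n. P [n, w]"] not_less_Least[of _ "\<lambda>n. P [n, w]"] by blast
  then show ?thesis unfolding ce_def by blast
qed

section \<open>Recursive arithmetic and codings\<close>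

lemma recfn_add:
  assumes "recfn X k A" and "recfn X k B"
  shows "recfn X k (\<lambda>xs. A xs + B xs)"
proof -
  have "recfn X 2 (\<lambda>xs. rec_nat (xs ! 1) (\<lambda>_ r. Suc r) (xs ! 0))"
    by (rule recfn_rec_nat_binary[where f = "\<lambda>b. b" and g = "\<lambda>_ _ r. Suc r"])
      (intro recfn_Suc recfn_proj; simp)+
  moreover have "rec_nat b (\<lambda>_ r. Suc r) a = a + b" for a b :: nat
    by (induction a) auto
  ultimately have "recfn X 2 (\<lambda>xs. xs ! 0 + xs ! 1)" by simp
  from recfn_comp2[OF this assms] show ?thesis .
qed

lemma recfn_mult:
  assumes "recfn X k A" and "recfn X k B"
  shows "recfn X k (\<lambda>xs. A xs * B xs)"
proof -
  have "recfn X 2 (\<lambda>xs. rec_nat 0 (\<lambda>_ r. r + xs ! 1) (xs ! 0))"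
    by (rule recfn_rec_nat_binary[where f = "\<lambda>_. 0" and g = "\<lambda>b _ r. r + b"])
      (intro recfn_add recfn_proj recfn_const; simp)+
  moreover have "rec_nat 0 (\<lambda>_ r. r + b) a = a * b" for a b :: nat
    by (induction a) auto
  ultimately have "recfn X 2 (\<lambda>xs. xs ! 0 * xs ! 1)" by simp
  from recfn_comp2[OF this assms] show ?thesis .
qed

lemma recfn_diff:
  assumes "recfn X k A" and "recfn X k B"
  shows "recfn X k (\<lambda>xs. A xs - B xs)"
proof -
  have "recfn X 1 (\<lambda>xs. rec_nat 0 (\<lambda>m _. m) (xs ! 0))"
    by (rule recfn_rec_nat_unary) (intro recfn_proj; simp)
  moreover have "rec_nat 0 (\<lambda>m _. m) n = n - 1" for n :: nat
    by (cases n) auto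
  ultimately have pred: "recfn X 1 (\<lambda>xs. xs ! 0 - 1)" by simp
  have "recfn X 2 (\<lambda>xs. rec_nat (xs ! 1) (\<lambda>_ r. r - 1) (xs ! 0))"
    by (rule recfn_rec_nat_binary[where f = "\<lambda>b. b" and g = "\<lambda>_ _ r. r - 1"])
      (intro recfn_comp1[OF pred] recfn_proj; simp)+
  moreover have "rec_nat b (\<lambda>_ r. r - 1) a = b - a" for a b :: nat
    by (induction a) auto
  ultimately have "recfn X 2 (\<lambda>xs. xs ! 1 - xs ! 0)" by simp
  then show ?thesis
    using recfn_comp2[of X "\<lambda>a b. b - a" k B A] assms by simp
qed

lemma recfn_If:
  assumes "rec_pred X k P" and "recfn X k T" and "recfn X k E"
  shows "recfn X k (\<lambda>xs. if P xs then T xs else E xs)"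
proof -
  let ?I = "\<lambda>xs. if P xs then 0 else 1 :: nat"
  have "recfn X k (\<lambda>xs. T xs * (1 - ?I xs) + E xs * ?I xs)"
    using assms unfolding rec_pred_def by (intro recfn_add recfn_mult recfn_diff recfn_const)
  then show ?thesis by (rule recfn_cong) simp
qed

lemma rec_pred_le:
  assumes "recfn X k A" and "recfn X k B"
  shows "rec_pred X k (\<lambda>xs. A xs \<le> B xs)"
proof -
  have "recfn X k (\<lambda>xs. 1 - (1 - (A xs - B xs)))"
    using assms by (intro recfn_diff recfn_const)
  then show ?thesis unfolding rec_pred_def by (rule recfn_cong) auto
qed

lemma rec_pred_conj:
  assumes "rec_pred X k P" and "rec_pred X k Q"
  shows "rec_pred X k (\<lambda>xs. P xs \<and> Q xs)"
proof -
  have "recfn X k (\<lambda>xs. 1 - (1 - ((if P xs then 0 else 1) + (if Q xs then 0 else 1))))"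
    using assms unfolding rec_pred_def by (intro recfn_diff recfn_add recfn_const)
  then show ?thesis unfolding rec_pred_def by (rule recfn_cong) auto
qed

lemma rec_pred_disj:
  assumes "rec_pred X k P" and "rec_pred X k Q"
  shows "rec_pred X k (\<lambda>xs. P xs \<or> Q xs)"
proof -
  have "recfn X k (\<lambda>xs. (if P xs then 0 else 1) * (if Q xs then 0 else 1))"
    using assms unfolding rec_pred_def by (intro recfn_mult)
  then show ?thesis unfolding rec_pred_def by (rule recfn_cong) auto
qed

lemma rec_pred_eq: "recfn X k A \<Longrightarrow> recfn X k B \<Longrightarrow> rec_pred X k (\<lambda>xs. A xs = B xs)"
  using rec_pred_conj[OF rec_pred_le rec_pred_le, of X k A B B A]
  by (rule rec_pred_cong) auto

lemma rec_pred_less: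
  assumes "recfn X k A" and "recfn X k B"
  shows "rec_pred X k (\<lambda>xs. A xs < B xs)"
  using rec_pred_le[OF recfn_Suc[OF assms(1)] assms(2)] by (rule rec_pred_cong) auto

lemma rec_pred_odd: "recfn X k A \<Longrightarrow> rec_pred X k (\<lambda>xs. odd (A xs))"
  unfolding rec_pred_def
proof (rule recfn_comp1[where g = "\<lambda>n. if odd n then 0 else 1"])
  have "recfn X 1 (\<lambda>xs. rec_nat 1 (\<lambda>_ r. 1 - r) (xs ! 0))"
    by (rule recfn_rec_nat_unary) (intro recfn_diff recfn_proj recfn_const; simp)
  moreover have "rec_nat 1 (\<lambda>_ r. 1 - r) n = (if odd n then 0 else 1 :: nat)" for n :: nat
    by (induction n) auto
  ultimately show "recfn X 1 (\<lambda>xs. if odd (xs ! 0) then 0 else 1)" by simp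
qed

lemma recfn_div2:
  assumes "recfn X k A"
  shows "recfn X k (\<lambda>xs. A xs div 2)"
proof -
  have "recfn X 1 (\<lambda>xs. rec_nat 0 (\<lambda>m r. if odd m then Suc r else r) (xs ! 0))"
    by (rule recfn_rec_nat_unary) (intro recfn_If rec_pred_odd recfn_Suc recfn_proj; simp)
  moreover have "rec_nat 0 (\<lambda>m r. if odd m then Suc r else r) n = n div 2" for n :: nat
    by (induction n) auto
  ultimately have "recfn X 1 (\<lambda>xs. xs ! 0 div 2)" by simp
  from recfn_comp1[OF this assms] show ?thesis .
qed

lemma recfn_power2:
  assumes "recfn X k A"
  shows "recfn X k (\<lambda>xs. 2 ^ A xs)"
proof -
  have "recfn X 1 (\<lambda>xs. rec_nat 1 (\<lambda>_ r. r + r) (xs ! 0))"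
    by (rule recfn_rec_nat_unary) (intro recfn_add recfn_proj; simp)
  moreover have "rec_nat 1 (\<lambda>_ r. r + r) n = (2::nat) ^ n" for n :: nat
    by (induction n) auto
  ultimately have "recfn X 1 (\<lambda>xs. 2 ^ (xs ! 0))" by simp
  from recfn_comp1[OF this assms] show ?thesis .
qed

lemma recfn_triangle:
  assumes "recfn X k A"
  shows "recfn X k (\<lambda>xs. triangle (A xs))"
proof -
  have "recfn X 1 (\<lambda>xs. rec_nat 0 (\<lambda>m r. r + Suc m) (xs ! 0))"
    by (rule recfn_rec_nat_unary) (intro recfn_add recfn_Suc recfn_proj; simp)
  moreover have "rec_nat 0 (\<lambda>m r. r + Suc m) n = triangle n" for n
    by (induction n) auto
  ultimately have "recfn X 1 (\<lambda>xs. triangle (xs ! 0))" by simp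
  from recfn_comp1[OF this assms] show ?thesis .
qed

lemma recfn_prod_encode:
  assumes "recfn X k A" and "recfn X k B"
  shows "recfn X k (\<lambda>xs. prod_encode (A xs, B xs))"
  using recfn_add[OF recfn_triangle[OF recfn_add[OF assms]] assms(1)] by (simp add: prod_encode_def)

definition triangle_root :: "nat \<Rightarrow> nat" where
  "triangle_root k = (LEAST t. k < triangle (Suc t))"

lemma triangle_root_prod_encode: "triangle_root (prod_encode (a, b)) = a + b"
  unfolding triangle_root_def
proof (rule Least_equality)
  show "prod_encode (a, b) < triangle (Suc (a + b))"
    by (simp add: prod_encode_def)
  have mono: "triangle (Suc t) \<le> triangle s" if "t < s" for t s
    using that by (induction s) (auto simp: less_Suc_eq)
  fix t assume t: "prod_encode (a, b) < triangle (Suc t)"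
  show "a + b \<le> t"
  proof (rule ccontr)
    assume "\<not> a + b \<le> t"
    then have "triangle (Suc t) \<le> prod_encode (a, b)"
      using mono[of t "a + b"] by (simp add: prod_encode_def)
    with t show False by simp
  qed
qed

lemma prod_decode_triangle_root:
  "prod_decode k = (k - triangle (triangle_root k), triangle_root k - (k - triangle (triangle_root k)))"
proof -
  obtain a b where k: "k = prod_encode (a, b)"
    by (metis prod_decode_inverse surj_pair)
  show ?thesis by (simp add: k triangle_root_prod_encode) (simp add: prod_encode_def)
qed

lemma recfn_triangle_root:
  assumes "recfn X k A"
  shows "recfn X k (\<lambda>xs. triangle_root (A xs))"
proof -
  have "rec_pred X 2 (\<lambda>ys. ys ! 1 < triangle (Suc (ys ! 0)))"
    by (intro rec_pred_less recfn_triangle recfn_Suc recfn_proj) simp_all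
  moreover have "\<exists>t. c < triangle (Suc t)" for c
    by (rule exI[of _ c]) simp
  ultimately have "recfn X 1 (\<lambda>xs. LEAST t. (t # xs) ! 1 < triangle (Suc ((t # xs) ! 0)))"
    by (intro recfn_Least) (simp_all add: numeral_2_eq_2)
  then have "recfn X 1 (\<lambda>xs. LEAST t. xs ! 0 < triangle (Suc t))"
    by simp
  from recfn_comp1[OF this assms] show ?thesis by (simp add: triangle_root_def)
qed

lemma recfn_fst_prod_decode: "recfn X k A \<Longrightarrow> recfn X k (\<lambda>xs. fst (prod_decode (A xs)))"
  unfolding prod_decode_triangle_root fst_conv by (intro recfn_diff recfn_triangle recfn_triangle_root)

lemma recfn_snd_prod_decode: "recfn X k A \<Longrightarrow> recfn X k (\<lambda>xs. snd (prod_decode (A xs)))"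
  unfolding prod_decode_triangle_root snd_conv by (intro recfn_diff recfn_triangle recfn_triangle_root)

lemma recfn_replicate_code:
  assumes "recfn X k A"
  shows "recfn X k (\<lambda>xs. list_encode (replicate (A xs) 0))"
proof -
  have "recfn X 1 (\<lambda>xs. rec_nat 0 (\<lambda>_ r. Suc (prod_encode (0, r))) (xs ! 0))"
    by (rule recfn_rec_nat_unary) (intro recfn_Suc recfn_prod_encode recfn_const recfn_proj; simp)
  moreover have "rec_nat 0 (\<lambda>_ r. Suc (prod_encode (0, r))) n = list_encode (replicate n 0)" for n
    by (induction n) auto
  ultimately have "recfn X 1 (\<lambda>xs. list_encode (replicate (xs ! 0) 0))" by simp
  from recfn_comp1[OF this assms] show ?thesis .
qed

definition code_tl :: "nat \<Rightarrow> nat" where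
  "code_tl c = snd (prod_decode (c - 1))"

lemma code_tl_list_encode: "code_tl (list_encode xs) = list_encode (tl xs)"
proof (cases xs)
  case Nil
  have "prod_encode (0, 0) = 0" by (simp add: prod_encode_def)
  then have "prod_decode 0 = (0, 0)" by (metis prod_encode_inverse)
  with Nil show ?thesis by (simp add: code_tl_def)
qed (simp add: code_tl_def)

lemma funpow_code_tl: "(code_tl ^^ t) (list_encode xs) = list_encode (drop t xs)"
  by (induction t) (simp_all add: code_tl_list_encode drop_Suc tl_drop)

definition code_length :: "nat \<Rightarrow> nat" where
  "code_length c = (LEAST t. (code_tl ^^ t) c = 0)"

lemma code_length_list_encode: "code_length (list_encode xs) = length xs"
  unfolding code_length_def
proof (rule Least_equality)
  show "(code_tl ^^ length xs) (list_encode xs) = 0"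
    by (simp add: funpow_code_tl)
  show "length xs \<le> t" if "(code_tl ^^ t) (list_encode xs) = 0" for t
  proof -
    have "list_encode (drop t xs) = 0" using that by (simp add: funpow_code_tl)
    then have "drop t xs = []" by (cases "drop t xs") auto
    then show ?thesis by simp
  qed
qed

lemma recfn_code_length:
  assumes "recfn X k A"
  shows "recfn X k (\<lambda>xs. code_length (A xs))"
proof -
  have "recfn X 2 (\<lambda>xs. rec_nat (xs ! 1) (\<lambda>_ r. code_tl r) (xs ! 0))"
    unfolding code_tl_def
    by (rule recfn_rec_nat_binary[where f = "\<lambda>b. b" and g = "\<lambda>_ _ r. snd (prod_decode (r - 1))"])
      (intro recfn_snd_prod_decode recfn_diff recfn_const recfn_proj; simp)+
  moreover have "rec_nat b (\<lambda>_ r. code_tl r) a = (code_tl ^^ a) b" for a b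
    by (induction a) auto
  ultimately have iter: "recfn X 2 (\<lambda>xs. (code_tl ^^ (xs ! 0)) (xs ! 1))" by simp
  have "\<exists>t. (code_tl ^^ t) c = 0" for c
    using funpow_code_tl[of "length (list_decode c)" "list_decode c"] by auto
  with rec_pred_eq[OF iter recfn_const]
  have "recfn X 1 (\<lambda>xs. LEAST t. (code_tl ^^ ((t # xs) ! 0)) ((t # xs) ! 1) = 0)"
    by (intro recfn_Least) (simp_all add: numeral_2_eq_2)
  then have "recfn X 1 (\<lambda>xs. LEAST t. (code_tl ^^ t) (xs ! 0) = 0)"
    by simp
  from recfn_comp1[OF this assms] show ?thesis by (simp add: code_length_def)
qed

lemma str_code_eq_iff: "str_code \<sigma> = str_code \<tau> \<longleftrightarrow> \<sigma> = \<tau>"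
proof -
  have "inj (\<lambda>b::bool. if b then 1 else (0::nat))" by (auto simp: inj_on_def)
  then show ?thesis by (simp add: str_code_def list_encode_eq)
qed

lemma code_length_str_code: "code_length (str_code \<sigma>) = length \<sigma>"
  by (simp add: str_code_def code_length_list_encode)

lemma rat_dec_prod_encode: "rat_dec (prod_encode (a, b)) = of_int (int_decode a) / of_nat (Suc b)"
  by (simp add: rat_dec_def)

lemma int_decode_0: "int_decode 0 = 0" and int_decode_2: "int_decode 2 = 1"
  by (simp_all add: int_decode_def sum_decode_def)

text \<open>An odd first component codes a negative numerator (see int_decode), so the bound holds.\<close>
lemma rat_dec_le_half_power_iff:
  "rat_dec v \<le> (1/2) ^ n \<longleftrightarrow>
     odd (fst (prod_decode v)) \<or> fst (prod_decode v) div 2 * 2 ^ n \<le> snd (prod_decode v) + 1"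
proof -
  obtain a b where v: "v = prod_encode (a, b)"
    by (metis prod_decode_inverse surj_pair)
  show ?thesis
  proof (cases "odd a")
    case True
    then have "rat_dec v < 0"
      by (simp add: v rat_dec_prod_encode int_decode_def sum_decode_def divide_neg_pos)
    moreover have "(0::real) < (1/2) ^ n" by simp
    ultimately have "rat_dec v \<le> (1/2) ^ n" by linarith
    with True show ?thesis by (simp add: v)
  next
    case False
    then have "rat_dec v = real (a div 2) / real (Suc b)"
      by (simp add: v rat_dec_prod_encode int_decode_def sum_decode_def)
    also have "\<dots> \<le> (1/2) ^ n \<longleftrightarrow> real (a div 2) * 2 ^ n \<le> real (Suc b)"
      by (simp add: divide_le_eq power_one_over field_simps)
    also have "\<dots> \<longleftrightarrow> a div 2 * 2 ^ n \<le> b + 1"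
      by (metis of_nat_le_iff of_nat_mult of_nat_numeral of_nat_power plus_1_eq_Suc add.commute)
    finally show ?thesis using False by (simp add: v)
  qed
qed

lemma rec_pred_rat_dec_le:
  assumes "recfn X k A" and "recfn X k B"
  shows "rec_pred X k (\<lambda>xs. rat_dec (A xs) \<le> (1/2) ^ B xs)"
  unfolding rat_dec_le_half_power_iff
  by (intro rec_pred_disj rec_pred_odd rec_pred_le recfn_mult recfn_div2 recfn_power2 recfn_add
      recfn_fst_prod_decode recfn_snd_prod_decode recfn_const assms)

section \<open>Cylinder sums\<close>

lemma length_init [simp]: "length (init x n) = n"
  by (simp add: init_def)

lemma init_Suc: "init x (Suc n) = init x n @ [x n]"
  by (simp add: init_def)

lemma prefix_init:
  assumes "j \<le> k"
  shows "prefix (init x j) (init x k)"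
proof -
  have "[0..<k] = [0..<j] @ [j..<k]"
    using upt_add_eq_append[of 0 j "k - j"] assms by simp
  then show ?thesis by (simp add: init_def prefix_def)
qed

definition cyl_level :: "bool list set \<Rightarrow> nat \<Rightarrow> bool list set" where
  "cyl_level S L = {\<tau>. length \<tau> = L \<and> (\<exists>\<sigma>\<in>S. prefix \<sigma> \<tau>)}"

lemma finite_strings_length: "finite {\<tau> :: bool list. length \<tau> = L}"
  using finite_lists_length_eq[of "UNIV :: bool set" L] by simp

lemma finite_cyl_level: "finite (cyl_level S L)"
  by (rule finite_subset[OF _ finite_strings_length[of L]]) (auto simp: cyl_level_def)

lemma is_meas_Nil: "is_meas m \<Longrightarrow> m [] = 1"
  and is_meas_nonneg: "is_meas m \<Longrightarrow> 0 \<le> m \<sigma>"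
  and is_meas_split: "is_meas m \<Longrightarrow> m \<sigma> = m (\<sigma> @ [False]) + m (\<sigma> @ [True])"
  unfolding is_meas_def by blast+

lemma strings_length_Suc:
  "{\<rho> :: bool list. length \<rho> = Suc d} = (\<lambda>\<rho>. False # \<rho>) ` {\<rho>. length \<rho> = d} \<union> (\<lambda>\<rho>. True # \<rho>) ` {\<rho>. length \<rho> = d}"
proof (intro set_eqI iffI)
  fix \<rho> :: "bool list" assume "\<rho> \<in> {\<rho>. length \<rho> = Suc d}"
  then obtain b \<rho>' where "\<rho> = b # \<rho>'" "length \<rho>' = d" by (auto simp: length_Suc_conv)
  then show "\<rho> \<in> (\<lambda>\<rho>. False # \<rho>) ` {\<rho>. length \<rho> = d} \<union> (\<lambda>\<rho>. True # \<rho>) ` {\<rho>. length \<rho> = d}"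
    by (cases b) auto
qed auto

lemma sum_extensions:
  assumes "is_meas m"
  shows "(\<Sum>\<rho>\<in>{\<rho>. length \<rho> = d}. m (\<sigma> @ \<rho>)) = m \<sigma>"
proof (induction d arbitrary: \<sigma>)
  case (Suc d)
  have "(\<Sum>\<rho>\<in>{\<rho>. length \<rho> = Suc d}. m (\<sigma> @ \<rho>)) =
        (\<Sum>\<rho>\<in>(\<lambda>\<rho>. False # \<rho>) ` {\<rho>. length \<rho> = d}. m (\<sigma> @ \<rho>)) +
        (\<Sum>\<rho>\<in>(\<lambda>\<rho>. True # \<rho>) ` {\<rho>. length \<rho> = d}. m (\<sigma> @ \<rho>))"
    unfolding strings_length_Suc by (rule sum.union_disjoint) (auto simp: finite_strings_length)
  also have "\<dots> = (\<Sum>\<rho>\<in>{\<rho>. length \<rho> = d}. m (\<sigma> @ False # \<rho>)) +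
                  (\<Sum>\<rho>\<in>{\<rho>. length \<rho> = d}. m (\<sigma> @ True # \<rho>))"
    by (simp add: sum.reindex)
  also have "\<dots> = m \<sigma>"
    using Suc.IH[of "\<sigma> @ [False]"] Suc.IH[of "\<sigma> @ [True]"] is_meas_split[OF assms, of \<sigma>] by simp
  finally show ?case .
qed simp

lemma sum_strings_length: "is_meas m \<Longrightarrow> (\<Sum>\<tau>\<in>{\<tau>. length \<tau> = L}. m \<tau>) = 1"
  using sum_extensions[where m = m and d = L and \<sigma> = "[]"] is_meas_Nil by simp

lemma sum_prefix_extensions_le:
  assumes "is_meas m"
  shows "(\<Sum>\<tau>\<in>{\<tau>. length \<tau> = L \<and> prefix \<sigma> \<tau>}. m \<tau>) \<le> m \<sigma>"
proof (cases "length \<sigma> \<le> L")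
  case True
  have "{\<tau>. length \<tau> = L \<and> prefix \<sigma> \<tau>} = (\<lambda>\<rho>. \<sigma> @ \<rho>) ` {\<rho>. length \<rho> = L - length \<sigma>}"
  proof (intro set_eqI iffI)
    fix \<tau> assume "\<tau> \<in> (\<lambda>\<rho>. \<sigma> @ \<rho>) ` {\<rho>. length \<rho> = L - length \<sigma>}"
    then show "\<tau> \<in> {\<tau>. length \<tau> = L \<and> prefix \<sigma> \<tau>}" using True by auto
  next
    fix \<tau> assume "\<tau> \<in> {\<tau>. length \<tau> = L \<and> prefix \<sigma> \<tau>}"
    then obtain \<rho> where "\<tau> = \<sigma> @ \<rho>" "length \<tau> = L" by (auto simp: prefix_def)
    then show "\<tau> \<in> (\<lambda>\<rho>. \<sigma> @ \<rho>) ` {\<rho>. length \<rho> = L - length \<sigma>}" by simp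
  qed
  then show ?thesis
    using sum_extensions[OF assms] by (simp add: sum.reindex inj_on_def)
next
  case False
  then have "{\<tau>. length \<tau> = L \<and> prefix \<sigma> \<tau>} = {}" by (auto dest: prefix_length_le)
  then show ?thesis using is_meas_nonneg[OF assms] by (simp only: sum.empty)
qed

lemma sum_cyl_level_le_open_meas:
  assumes "is_meas m"
  shows "(\<Sum>\<tau>\<in>cyl_level S L. m \<tau>) \<le> open_meas m S"
proof -
  have "(\<Sum>\<tau>\<in>cyl_level S L'. m \<tau>) \<le> 1" for L'
    using sum_mono2[OF finite_strings_length, where A = "cyl_level S L'" and f = m]
      sum_strings_length[OF assms]
    by (auto simp: cyl_level_def is_meas_nonneg[OF assms])
  then show ?thesis
    unfolding open_meas_def cyl_level_def[symmetric] by (intro cSUP_upper bdd_aboveI2) auto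
qed

lemma open_meas_le: "(\<And>L. (\<Sum>\<tau>\<in>cyl_level S L. m \<tau>) \<le> c) \<Longrightarrow> open_meas m S \<le> c"
  unfolding open_meas_def cyl_level_def[symmetric] by (rule cSUP_least) auto

lemma le_open_meas:
  assumes "is_meas m" and "\<sigma> \<in> S"
  shows "m \<sigma> \<le> open_meas m S"
proof -
  have "m \<sigma> \<le> (\<Sum>\<tau>\<in>cyl_level S (length \<sigma>). m \<tau>)"
    using assms by (intro member_le_sum finite_cyl_level) (auto simp: cyl_level_def is_meas_nonneg)
  also have "\<dots> \<le> open_meas m S"
    by (rule sum_cyl_level_le_open_meas[OF assms(1)])
  finally show ?thesis .
qed

text \<open>An open set generated by initial segments of one sequence is the cylinder of the shortest of them.\<close>
lemma open_meas_initial_segments_le: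
  assumes "is_meas m" and "0 \<le> c" and S: "\<And>\<sigma>. \<sigma> \<in> S \<Longrightarrow> (\<exists>k. \<sigma> = init z k) \<and> m \<sigma> \<le> c"
  shows "open_meas m S \<le> c"
proof (cases "S = {}")
  case False
  then obtain k0 where "init z k0 \<in> S" using S by blast
  define j where "j = (LEAST j. init z j \<in> S)"
  have j: "init z j \<in> S" unfolding j_def by (rule LeastI) fact
  have "(\<Sum>\<tau>\<in>cyl_level S L. m \<tau>) \<le> c" for L
  proof -
    have "cyl_level S L \<subseteq> {\<tau>. length \<tau> = L \<and> prefix (init z j) \<tau>}"
    proof
      fix \<tau> assume "\<tau> \<in> cyl_level S L"
      then obtain \<sigma> where \<sigma>: "\<sigma> \<in> S" "prefix \<sigma> \<tau>" "length \<tau> = L" by (auto simp: cyl_level_def)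
      then obtain k where "\<sigma> = init z k" using S by blast
      moreover from this have "j \<le> k" unfolding j_def using \<sigma>(1) by (simp add: Least_le)
      ultimately show "\<tau> \<in> {\<tau>. length \<tau> = L \<and> prefix (init z j) \<tau>}"
        using \<sigma> prefix_order.trans[OF prefix_init] by blast
    qed
    then have "(\<Sum>\<tau>\<in>cyl_level S L. m \<tau>) \<le> (\<Sum>\<tau>\<in>{\<tau>. length \<tau> = L \<and> prefix (init z j) \<tau>}. m \<tau>)"
      by (rule sum_mono2[rotated])
        (auto intro: finite_subset[OF _ finite_strings_length] simp: is_meas_nonneg[OF assms(1)])
    also have "\<dots> \<le> m (init z j)" by (rule sum_prefix_extensions_le[OF assms(1)])
    also have "\<dots> \<le> c" using S j by blast
    finally show ?thesis .
  qed
  then show ?thesis by (rule open_meas_le)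
qed (simp add: open_meas_le cyl_level_def assms(2))

section \<open>Computable sequences\<close>

definition comp_seq :: "(nat \<Rightarrow> bool) \<Rightarrow> bool" where
  "comp_seq z \<longleftrightarrow> comp_fun no_oracle (\<lambda>k. str_code (init z k))"

lemma recfn_comp_seq:
  assumes "comp_seq z" and "recfn no_oracle k A"
  shows "recfn no_oracle k (\<lambda>xs. str_code (init z (A xs)))"
  using assms(2) by (rule recfn_comp1[OF assms(1)[unfolded comp_seq_def comp_fun_iff_recfn]])

definition point_mass :: "(nat \<Rightarrow> bool) \<Rightarrow> bool list \<Rightarrow> real" where
  "point_mass z \<sigma> = (if \<sigma> = init z (length \<sigma>) then 1 else 0)"

lemma is_meas_point_mass: "is_meas (point_mass z)"
  unfolding is_meas_def point_mass_def
proof (intro conjI allI)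
  fix \<sigma> :: "bool list"
  show "(if \<sigma> = init z (length \<sigma>) then 1 else 0) =
        (if \<sigma> @ [False] = init z (length (\<sigma> @ [False])) then 1 else 0) +
        (if \<sigma> @ [True] = init z (length (\<sigma> @ [True])) then 1 else (0::real))"
    by (cases "z (length \<sigma>)") (auto simp: init_Suc)
qed (auto simp: init_def)

lemma comp_meas_point_mass:
  assumes "comp_seq z"
  shows "comp_meas (point_mass z)"
proof -
  define f where "f c = prod_encode (if c = str_code (init z (code_length c)) then 2 else 0, 0)" for c
  have "recfn no_oracle 1 (\<lambda>xs. f (fst (prod_decode (xs ! 0))))"
    unfolding f_def
    by (intro recfn_prod_encode recfn_If rec_pred_eq recfn_comp_seq[OF assms] recfn_code_length
        recfn_fst_prod_decode recfn_proj recfn_const) simp_all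
  then have "comp_fun no_oracle (\<lambda>k. f (fst (prod_decode k)))"
    by (simp add: comp_fun_iff_recfn)
  moreover have "rat_dec (f (fst (prod_decode (prod_encode (str_code \<sigma>, n))))) = point_mass z \<sigma>" for \<sigma> n
    by (simp add: f_def code_length_str_code str_code_eq_iff rat_dec_prod_encode int_decode_0
        int_decode_2 point_mass_def)
  ultimately show ?thesis
    unfolding comp_meas_def by (intro exI[of _ "\<lambda>k. f (fst (prod_decode k))"]) simp
qed

lemma MLR_point_mass: "MLR (point_mass z) X z"
  unfolding MLR_def
proof
  assume "\<exists>W. ce X W \<and> (\<forall>n. open_meas (point_mass z) (test_level W n) \<le> (1/2) ^ n) \<and>
             (\<forall>n. \<exists>\<sigma>\<in>test_level W n. \<sigma> = init z (length \<sigma>))"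
  then obtain W \<sigma> where "open_meas (point_mass z) (test_level W 1) \<le> 1/2"
    and "\<sigma> \<in> test_level W 1" and "\<sigma> = init z (length \<sigma>)"
    by (metis power_one_right)
  then show False
    using le_open_meas[OF is_meas_point_mass, of \<sigma> "test_level W 1" z] by (simp add: point_mass_def)
qed

lemma comp_seq_proper: "comp_seq z \<Longrightarrow> proper z"
  unfolding proper_def using is_meas_point_mass comp_meas_point_mass MLR_point_mass by blast

lemma ce_certified_initial_segments:
  assumes "comp_seq z" and "comp_fun no_oracle f"
  obtains W where "ce no_oracle W"
    and "\<And>\<sigma> n. \<sigma> \<in> test_level W n \<longleftrightarrow>
           (\<exists>k. \<sigma> = init z k) \<and> rat_dec (f (prod_encode (str_code \<sigma>, n + 2))) \<le> (1/2) ^ (n + 1)"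
proof
  define W where "W = {w. \<exists>k. snd (prod_decode w) = str_code (init z k) \<and>
    rat_dec (f (prod_encode (snd (prod_decode w), fst (prod_decode w) + 2))) \<le> (1/2) ^ (fst (prod_decode w) + 1)}"
  have recfn_f: "recfn no_oracle k A \<Longrightarrow> recfn no_oracle k (\<lambda>xs. f (A xs))" for k A
    by (rule recfn_comp1[OF assms(2)[unfolded comp_fun_iff_recfn]])
  have "rec_pred no_oracle 2 (\<lambda>xs. snd (prod_decode (xs ! 1)) = str_code (init z (xs ! 0)) \<and>
    rat_dec (f (prod_encode (snd (prod_decode (xs ! 1)), fst (prod_decode (xs ! 1)) + 2)))
      \<le> (1/2) ^ (fst (prod_decode (xs ! 1)) + 1))"
    by (intro rec_pred_conj rec_pred_eq rec_pred_rat_dec_le recfn_snd_prod_decode recfn_fst_prod_decode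
        recfn_comp_seq[OF assms(1)] recfn_f recfn_prod_encode recfn_add recfn_const recfn_proj) simp_all
  from ce_rec_pred[OF this] show "ce no_oracle W"
    by (simp add: W_def)
  show "\<sigma> \<in> test_level W n \<longleftrightarrow>
      (\<exists>k. \<sigma> = init z k) \<and> rat_dec (f (prod_encode (str_code \<sigma>, n + 2))) \<le> (1/2) ^ (n + 1)" for \<sigma> n
    by (simp add: test_level_def W_def str_code_eq_iff)
qed

text \<open>Level n of the test consists of the initial segments of z whose measure is certified,
  at precision 2^-(n+2), to be at most 2^-(n+1); atomlessness makes every level nonempty.\<close>
lemma comp_seq_not_cont_proper:
  assumes "comp_seq z"
  shows "\<not> cont_proper z"
proof
  assume "cont_proper z"
  then obtain m where m: "is_meas m" "comp_meas m" "atomless m" "MLR m no_oracle z"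
    unfolding cont_proper_def by blast
  from m(2) obtain f where f: "comp_fun no_oracle f"
    and approx: "\<And>\<sigma> n. \<bar>rat_dec (f (prod_encode (str_code \<sigma>, n))) - m \<sigma>\<bar> \<le> (1/2) ^ n"
    unfolding comp_meas_def by blast
  obtain W where "ce no_oracle W" and level: "\<And>\<sigma> n. \<sigma> \<in> test_level W n \<longleftrightarrow>
      (\<exists>k. \<sigma> = init z k) \<and> rat_dec (f (prod_encode (str_code \<sigma>, n + 2))) \<le> (1/2) ^ (n + 1)"
    using ce_certified_initial_segments[OF assms f] by blast
  have "open_meas m (test_level W n) \<le> (1/2) ^ n" for n
  proof (rule open_meas_initial_segments_le[OF m(1)])
    fix \<sigma> assume "\<sigma> \<in> test_level W n"
    then have seg: "\<exists>k. \<sigma> = init z k"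
      and certified: "rat_dec (f (prod_encode (str_code \<sigma>, n + 2))) \<le> (1/2) ^ (n + 1)"
      unfolding level by simp_all
    have "m \<sigma> \<le> (1/2) ^ (n + 1) + (1/2) ^ (n + 2)"
      using approx[of \<sigma> "n + 2"] certified unfolding abs_le_iff by linarith
    also have "\<dots> \<le> (1/2) ^ n" by simp
    finally show "(\<exists>k. \<sigma> = init z k) \<and> m \<sigma> \<le> (1/2) ^ n"
      using seg by blast
  qed simp
  moreover have "\<exists>\<sigma>\<in>test_level W n. \<sigma> = init z (length \<sigma>)" for n
  proof -
    have "(\<lambda>k. m (init z k)) \<longlonglongrightarrow> 0"
      using m(3) by (simp add: atomless_def)
    then have "\<forall>\<^sub>F k in sequentially. m (init z k) < (1/2) ^ (n + 2)"
      by (rule order_tendstoD(2)) simp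
    then obtain k where small: "m (init z k) < (1/2) ^ (n + 2)"
      by (auto simp: eventually_sequentially)
    have "(1/2::real) ^ (n + 1) = 2 * (1/2) ^ (n + 2)" by simp
    then have "rat_dec (f (prod_encode (str_code (init z k), n + 2))) \<le> (1/2) ^ (n + 1)"
      using approx[of "init z k" "n + 2"] small unfolding abs_le_iff by linarith
    then have "init z k \<in> test_level W n"
      unfolding level by blast
    then show ?thesis by (intro bexI[of _ "init z k"]) simp_all
  qed
  ultimately show False
    using m(4) \<open>ce no_oracle W\<close> unfolding MLR_def by blast
qed

section \<open>The uniform measure\<close>

lemma bern_half: "bern (1/2) \<sigma> = (1/2) ^ length \<sigma>"
proof -
  have "length (filter Not \<sigma>) + length (filter id \<sigma>) = length \<sigma>"
    using sum_length_filter_compl[of id \<sigma>] by (simp add: add.commute)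
  then show ?thesis unfolding bern_def by (simp add: power_add[symmetric])
qed

lemma is_meas_bern_half: "is_meas (bern (1/2))"
  unfolding is_meas_def bern_half by simp

lemma atomless_bern_half: "atomless (bern (1/2))"
  unfolding atomless_def bern_half by (simp add: LIMSEQ_realpow_zero)

lemma comp_meas_bern_half: "comp_meas (bern (1/2))"
proof -
  define f where "f k = prod_encode (2, 2 ^ code_length (fst (prod_decode k)) - 1)" for k
  have "recfn no_oracle 1 (\<lambda>xs. f (xs ! 0))"
    unfolding f_def
    by (intro recfn_prod_encode recfn_diff recfn_power2 recfn_code_length recfn_fst_prod_decode
        recfn_const recfn_proj) simp
  moreover have "rat_dec (f (prod_encode (str_code \<sigma>, n))) = bern (1/2) \<sigma>" for \<sigma> n
  proof -
    have "real (Suc (2 ^ length \<sigma> - 1)) = 2 ^ length \<sigma>"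
      by (simp add: of_nat_diff)
    then show ?thesis
      by (simp add: f_def code_length_str_code rat_dec_prod_encode int_decode_2 bern_half power_one_over)
  qed
  ultimately show ?thesis
    unfolding comp_meas_def comp_fun_iff_recfn by (intro exI[of _ f]) simp
qed

section \<open>Random sequences relative to countably many oracles\<close>

lemma sum_UN_le:
  fixes f :: "'a \<Rightarrow> 'b::ordered_comm_monoid_add"
  assumes "finite I" and "\<And>i. i \<in> I \<Longrightarrow> finite (A i)" and "\<And>x. 0 \<le> f x"
  shows "sum f (\<Union>i\<in>I. A i) \<le> (\<Sum>i\<in>I. sum f (A i))"
proof -
  have "sum f (\<Union>i\<in>I. A i) = sum f (snd ` (SIGMA i:I. A i))"
    by (rule arg_cong[where f = "sum f"]) force
  also have "\<dots> \<le> sum (f \<circ> snd) (SIGMA i:I. A i)"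
    using assms by (intro sum_image_le) auto
  also have "\<dots> = (\<Sum>i\<in>I. sum f (A i))"
    using assms by (simp add: sum.Sigma split_def)
  finally show ?thesis .
qed

lemma sum_half_powers_le: "finite I \<Longrightarrow> (\<Sum>i\<in>I. (1/2::real) ^ (i + 2)) \<le> 1/2"
proof -
  assume "finite I"
  have "(\<lambda>i. (1/2::real) ^ (i + 2)) sums (1/4 * (1 / (1 - 1/2)))"
    using sums_mult[OF geometric_sums[of "1/2::real"], of "1/4"] by (simp add: power_add mult.commute)
  then have "(\<lambda>i. (1/2::real) ^ (i + 2)) sums (1/2)" by simp
  with \<open>finite I\<close> show ?thesis
    using sum_le_suminf[of "\<lambda>i. (1/2::real) ^ (i + 2)" I] by (simp add: sums_iff)
qed

definition avoids :: "bool list set \<Rightarrow> bool list \<Rightarrow> bool" where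
  "avoids U \<tau> \<longleftrightarrow> (\<forall>\<sigma>\<in>U. \<not> prefix \<sigma> \<tau>)"

definition extendable :: "bool list set \<Rightarrow> bool list \<Rightarrow> bool" where
  "extendable U \<tau> \<longleftrightarrow> (\<forall>d. \<exists>\<rho>. length \<rho> = d \<and> avoids U (\<tau> @ \<rho>))"

text \<open>If both one-bit extensions had a depth without U-avoiding continuation, a continuation of
  the larger depth from \<tau> would have a U-avoiding prefix of one of these depths.\<close>
lemma extendable_snoc: "extendable U \<tau> \<Longrightarrow> \<exists>b. extendable U (\<tau> @ [b])"
proof (rule ccontr)
  assume "extendable U \<tau>" and "\<nexists>b. extendable U (\<tau> @ [b])"
  then have "\<forall>b. \<exists>d. \<forall>\<rho>. length \<rho> = d \<longrightarrow> \<not> avoids U (\<tau> @ [b] @ \<rho>)"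
    unfolding extendable_def by simp
  from choice[OF this] obtain d where d: "\<forall>b \<rho>. length \<rho> = d b \<longrightarrow> \<not> avoids U (\<tau> @ [b] @ \<rho>)"
    by blast
  from \<open>extendable U \<tau>\<close> obtain \<rho> where \<rho>: "length \<rho> = Suc (d False + d True)" "avoids U (\<tau> @ \<rho>)"
    unfolding extendable_def by blast
  then obtain b \<rho>' where \<rho>': "\<rho> = b # \<rho>'" "length \<rho>' = d False + d True"
    by (auto simp: length_Suc_conv)
  have "prefix (\<tau> @ [b] @ take (d b) \<rho>') (\<tau> @ \<rho>)"
    unfolding \<rho>'(1) by (simp add: take_is_prefix)
  then have "avoids U (\<tau> @ [b] @ take (d b) \<rho>')"
    using \<rho>(2) unfolding avoids_def by (meson prefix_order.trans)
  moreover have "length (take (d b) \<rho>') = d b"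
    using \<rho>'(2) by (cases b) simp_all
  ultimately show False using d by blast
qed

lemma exists_path_avoiding:
  assumes "\<And>L. \<exists>\<tau>. length \<tau> = L \<and> avoids U \<tau>"
  shows "\<exists>x. \<forall>\<sigma>\<in>U. \<sigma> \<noteq> init x (length \<sigma>)"
proof -
  have "\<exists>\<tau>'. (length \<tau>' = Suc n \<and> extendable U \<tau>') \<and> (\<exists>b. \<tau>' = \<tau> @ [b])"
    if "length \<tau> = n \<and> extendable U \<tau>" for n \<tau>
  proof -
    from that extendable_snoc obtain b where "extendable U (\<tau> @ [b])" by blast
    with that show ?thesis by (intro exI[of _ "\<tau> @ [b]"]) auto
  qed
  moreover have "extendable U []"
    using assms by (simp add: extendable_def)
  ultimately have "\<exists>f. \<forall>n. (length (f n) = n \<and> extendable U (f n)) \<and> (\<exists>b. f (Suc n) = f n @ [b])"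
    by (intro dependent_nat_choice) auto
  then obtain f where f: "\<And>n. length (f n) = n" "\<And>n. extendable U (f n)" "\<And>n. \<exists>b. f (Suc n) = f n @ [b]"
    by blast
  define x where "x n = f (Suc n) ! n" for n
  have init_x: "init x n = f n" for n
  proof (induction n)
    case 0 show ?case using f(1)[of 0] by (simp add: init_def)
  next
    case (Suc n)
    obtain b where b: "f (Suc n) = f n @ [b]" using f(3) by blast
    then have "x n = b" by (simp add: x_def nth_append f(1))
    with Suc.IH b show ?case by (simp add: init_Suc)
  qed
  have avoids_f: "avoids U (f n)" for n
    using f(2)[of n] unfolding extendable_def by (metis append_Nil2 length_0_conv)
  have "\<sigma> \<noteq> init x (length \<sigma>)" if "\<sigma> \<in> U" for \<sigma>
    using avoids_f[of "length \<sigma>"] that unfolding avoids_def init_x by auto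
  then show ?thesis by blast
qed

lemma sum_cyl_level_Union_le:
  assumes "is_meas m" and "\<And>i. open_meas m (S i) \<le> (1/2) ^ (i + 2)"
  shows "(\<Sum>\<tau>\<in>cyl_level (\<Union>i. S i) L. m \<tau>) \<le> 1/2"
proof -
  have "cyl_level (\<Union>i. S i) L \<subseteq> \<Union>(range (\<lambda>i. cyl_level (S i) L))"
    by (auto simp: cyl_level_def)
  then obtain \<F> where \<F>: "finite \<F>" "\<F> \<subseteq> range (\<lambda>i. cyl_level (S i) L)"
    and covered: "cyl_level (\<Union>i. S i) L \<subseteq> \<Union>\<F>"
    by (rule finite_subset_Union[OF finite_cyl_level])
  obtain I where I: "finite I" "\<F> = (\<lambda>i. cyl_level (S i) L) ` I"
    using finite_subset_image[OF \<F>] by blast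
  have "(\<Sum>\<tau>\<in>cyl_level (\<Union>i. S i) L. m \<tau>) \<le> (\<Sum>\<tau>\<in>(\<Union>i\<in>I. cyl_level (S i) L). m \<tau>)"
    using covered unfolding I(2)
    by (rule sum_mono2[rotated]) (simp_all add: I(1) finite_cyl_level is_meas_nonneg[OF assms(1)])
  also have "\<dots> \<le> (\<Sum>i\<in>I. \<Sum>\<tau>\<in>cyl_level (S i) L. m \<tau>)"
    by (rule sum_UN_le[OF I(1) finite_cyl_level is_meas_nonneg[OF assms(1)]])
  also have "\<dots> \<le> (\<Sum>i\<in>I. (1/2) ^ (i + 2))"
    by (rule sum_mono, rule order_trans[OF sum_cyl_level_le_open_meas[OF assms(1)] assms(2)])
  also have "\<dots> \<le> 1/2"
    by (rule sum_half_powers_le[OF I(1)])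
  finally show ?thesis .
qed

instance recf :: countable by countable_datatype

text \<open>Level i + 2 of the i-th enumerated test, for all oracles at once, gives an open set of
  measure at most 1/2; a path avoiding it passes every test.\<close>
lemma exists_MLR:
  fixes Xs :: "nat \<Rightarrow> nat \<Rightarrow> bool"
  assumes "is_meas m"
  shows "\<exists>x. \<forall>j. MLR m (Xs j) x"
proof -
  define W where "W i = (case from_nat i :: recf \<times> nat of (P, j) \<Rightarrow> {n. \<exists>y. ev (Xs j) P [n] y})" for i
  define S where "S i = (if \<forall>n. open_meas m (test_level (W i) n) \<le> (1/2) ^ n
                          then test_level (W i) (i + 2) else {})" for i
  have "open_meas m (S i) \<le> (1/2) ^ (i + 2)" for i
  proof (cases "\<forall>n. open_meas m (test_level (W i) n) \<le> (1/2) ^ n")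
    case True
    then show ?thesis unfolding S_def if_P[OF True] by blast
  next
    case False
    then show ?thesis unfolding S_def if_not_P[OF False] by (intro open_meas_le) (simp add: cyl_level_def)
  qed
  then have small: "(\<Sum>\<tau>\<in>cyl_level (\<Union>i. S i) L. m \<tau>) \<le> 1/2" for L
    by (rule sum_cyl_level_Union_le[OF assms])
  have "\<exists>\<tau>. length \<tau> = L \<and> avoids (\<Union>i. S i) \<tau>" for L
  proof (rule ccontr)
    assume "\<nexists>\<tau>. length \<tau> = L \<and> avoids (\<Union>i. S i) \<tau>"
    then have "cyl_level (\<Union>i. S i) L = {\<tau>. length \<tau> = L}"
      unfolding cyl_level_def avoids_def by blast
    with small[of L] sum_strings_length[OF assms, of L] show False by simp
  qed
  then obtain x where x: "\<forall>\<sigma>\<in>(\<Union>i. S i). \<sigma> \<noteq> init x (length \<sigma>)"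
    using exists_path_avoiding by blast
  have "MLR m (Xs j) x" for j
    unfolding MLR_def
  proof
    assume "\<exists>V. ce (Xs j) V \<and> (\<forall>n. open_meas m (test_level V n) \<le> (1/2) ^ n) \<and>
                (\<forall>n. \<exists>\<sigma>\<in>test_level V n. \<sigma> = init x (length \<sigma>))"
    then obtain V where V: "ce (Xs j) V" "\<forall>n. open_meas m (test_level V n) \<le> (1/2) ^ n"
      "\<forall>n. \<exists>\<sigma>\<in>test_level V n. \<sigma> = init x (length \<sigma>)"
      by blast
    from V(1) obtain P where P: "V = {n. \<exists>y. ev (Xs j) P [n] y}"
      unfolding ce_def by blast
    define i where "i = to_nat (P, j)"
    have "W i = V" by (simp add: W_def i_def P)
    then have "S i = test_level V (i + 2)"
      using V(2) by (simp add: S_def)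
    then obtain \<sigma> where "\<sigma> \<in> S i" "\<sigma> = init x (length \<sigma>)"
      using V(3) by blast
    with x show False by blast
  qed
  then show ?thesis by blast
qed

lemma binexp_half: "binexp (1/2) = (\<lambda>n. n = 0)"
proof
  fix n
  have "(1/2::real) * 2 ^ Suc n = 2 ^ n" by simp
  then have "nat \<lfloor>(1/2::real) * 2 ^ Suc n\<rfloor> = 2 ^ n"
    by (metis floor_of_nat nat_int of_nat_numeral of_nat_power)
  then show "binexp (1/2) n = (n = 0)" by (simp add: binexp_def nat_power_eq)
qed

lemma comp_seq_binexp_half: "comp_seq (binexp (1/2))"
proof -
  have init_Suc_first: "init (\<lambda>n. n = 0) (Suc j) = True # replicate j False" for j
    by (rule nth_equalityI) (auto simp: init_def nth_Cons' simp del: upt_Suc)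
  have code: "str_code (init (\<lambda>n. n = 0) k) =
      (if k = 0 then 0 else Suc (prod_encode (1, list_encode (replicate (k - 1) 0))))" for k
  proof (cases k)
    case (Suc j)
    then show ?thesis by (simp add: init_Suc_first str_code_def map_replicate)
  qed (simp add: init_def str_code_def)
  have "recfn no_oracle 1 (\<lambda>xs. if xs ! 0 = 0 then 0
                             else Suc (prod_encode (1, list_encode (replicate (xs ! 0 - 1) 0))))"
    by (intro recfn_If rec_pred_eq recfn_Suc recfn_prod_encode recfn_replicate_code recfn_diff
        recfn_const recfn_proj) simp_all
  then show ?thesis
    unfolding comp_seq_def comp_fun_iff_recfn binexp_half code .
qed

theorem mainTheorem6:
  shows "\<exists>r::real. 0 \<le> r \<and> r \<le> 1 \<and> proper (binexp r) \<and> \<not> cont_proper (binexp r) \<and>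
           (\<exists>x. MLR (bern r) (binexp r) x \<and> cont_proper x)"
proof (intro exI[of _ "1/2"] conjI)
  show "proper (binexp (1/2))"
    using comp_seq_binexp_half by (rule comp_seq_proper)
  show "\<not> cont_proper (binexp (1/2))"
    using comp_seq_binexp_half by (rule comp_seq_not_cont_proper)
  obtain x where x: "\<forall>j::nat. MLR (bern (1/2)) (if j = 0 then binexp (1/2) else no_oracle) x"
    using exists_MLR[OF is_meas_bern_half, of "\<lambda>j::nat. if j = 0 then binexp (1/2) else no_oracle"] by blast
  have "cont_proper x"
    unfolding cont_proper_def
    using is_meas_bern_half comp_meas_bern_half atomless_bern_half spec[OF x, of 1] by auto
  with spec[OF x, of 0] show "\<exists>x. MLR (bern (1/2)) (binexp (1/2)) x \<and> cont_proper x"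
    by auto
qed simp_all

end
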